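(* Let $K=\{p\in\mathbb{R}^3:0\le p_3\le\theta(p_1,p_2)\}$ and, for $p^{pr}\in K$, let $N_K(p^{pr})=\{z\in\mathbb{R}^3:\langle z,q-p^{pr}\rangle\le0\ \forall q\in K\}$ be the normal cone. Then: (i) if $p^{pr}\in\{(p_1,p_2,p_3):0<p_3<\theta(p_1,p_2)\}$, then $N_K(p^{pr})=\{0\}$; (ii) if $p^{pr}\in(0,\infty)\times(0,\infty)\times\{0\}$, then $N_K(p^{pr})=\{0\}\times\{0\}\times(-\infty,0]$; (iii) if $p^{pr}=(p^{pr}_1,0,0)$ with $p^{pr}_1>0$, then $N_K(p^{pr})=\{0\}\times(-\infty,0]\times(-\infty,0]\ \cup\ \{(0,q_2,q_3)\in\{0\}\times(-\infty,0]\times(0,\infty):(0,-q_2/q_3)\in\partial^+\theta(p^{pr}_1,0)\}$; moreover $(0,q)\in\partial^+\theta(p^{pr}_1,0)$ is equivalent to $q\ge\lim_{z\searrow0}\partial_2\theta(p^{pr}_1,z)$, and $\partial^+\theta(p^{pr}_1,0)$ is empty if this limit equals $+\infty$; the analogous representation holds for $p^{pr}=(0,p^{pr}_2,0)$ with $p^{pr}_2>0$; (iv) if $p^{pr}=(0,0,0)$, then $N_K(p^{pr})=(-\infty,0]^3\cup\{(q_1,q_2,q_3)\in(-\infty,0]\times(-\infty,0]\times(0,\infty):(q_1/q_3,q_2/q_3)\in-\partial^+\theta(0)\}$; (v) if $p^{pr}=(p^{pr}_1,p^{pr}_2,\theta(p^{pr}_1,p^{pr}_2))$ with $(p^{pr}_1,p^{pr}_2)\in(0,\infty)^2$,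 then $N_K(p^{pr})=\{\lambda(-\partial_1\theta(p^{pr}_1,p^{pr}_2),-\partial_2\theta(p^{pr}_1,p^{pr}_2),1):\lambda>0\}$.
   Context: $\theta:[0,\infty)^2\to[0,\infty)$ is continuous, concave, 1-homogeneous, symmetric, $C^\infty$ on $(0,\infty)^2$, with $\theta(0,s)=\theta(s,0)=0$, $\theta(s,s)=s$, $\theta(s,t)>0$ for $s,t>0$, and nondecreasing in each argument; it is regarded as a concave function $\mathbb{R}^2\to\mathbb{R}\cup\{-\infty\}$ by setting $\theta(s,t)=-\infty$ if $\min\{s,t\}<0$. The super-differential of $\theta$ at $x\in\mathbb{R}^2$ is $\partial^+\theta(x)=-\partial(-\theta)(x)$, where $\partial(-\theta)(x)$ is the convex subdifferential of $-\theta$ at $x$; equivalently $\partial^+\theta(x)=\{r\in\mathbb{R}^2:\theta(y)\le\theta(x)+\langle r,y-x\rangle\ \forall y\in\mathbb{R}^2\}$. *)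

theory Defs
  imports "HOL-Analysis.Analysis"
begin

definition quadrant :: "(real \<times> real) set" where
  "quadrant = {0..} \<times> {0..}"

definition open_quadrant :: "(real \<times> real) set" where
  "open_quadrant = {0<..} \<times> {0<..}"

text \<open>C^k regularity of a function of two real variables on a set S (intended: S open),
  via continuity and existence of C^(k-1) partial derivatives (Frechet differentiability).\<close>
fun Ck_on :: "nat \<Rightarrow> (real \<times> real \<Rightarrow> real) \<Rightarrow> (real \<times> real) set \<Rightarrow> bool" where
  "Ck_on 0 f S = continuous_on S f"
| "Ck_on (Suc n) f S =
     (\<exists>g1 g2. (\<forall>x\<in>S. (f has_derivative (\<lambda>h. g1 x * fst h + g2 x * snd h)) (at x))
              \<and> Ck_on n g1 S \<and> Ck_on n g2 S)"

definition smooth_on2 :: "(real \<times> real \<Rightarrow> real) \<Rightarrow> (real \<times> real) set \<Rightarrow> bool" where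
  "smooth_on2 f S = (\<forall>n. Ck_on n f S)"

text \<open>theta regarded as a concave function R^2 -> R \<union> {-\<infinity>}.\<close>
definition theta_ext :: "(real \<Rightarrow> real \<Rightarrow> real) \<Rightarrow> real \<times> real \<Rightarrow> ereal" where
  "theta_ext th x = (if fst x \<ge> 0 \<and> snd x \<ge> 0 then ereal (th (fst x) (snd x)) else -\<infinity>)"

definition superdiff :: "(real \<times> real \<Rightarrow> ereal) \<Rightarrow> real \<times> real \<Rightarrow> (real \<times> real) set" where
  "superdiff g x = {r. \<forall>y. g y \<le> g x + ereal (r \<bullet> (y - x))}"

definition normal_cone :: "'a::real_inner set \<Rightarrow> 'a \<Rightarrow> 'a set" where
  "normal_cone K p = {z. \<forall>q\<in>K. z \<bullet> (q - p) \<le> 0}"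

definition Kset :: "(real \<Rightarrow> real \<Rightarrow> real) \<Rightarrow> (real \<times> real \<times> real) set" where
  "Kset th = {(p1, p2, p3). p1 \<ge> 0 \<and> p2 \<ge> 0 \<and> 0 \<le> p3 \<and> p3 \<le> th p1 p2}"

end

theory Submission
  imports Defs
begin

text \<open>Since the fibre of K over (s, t) is the segment [0, \<theta>(s, t)], a vector z is normal to K at p
  iff the affine function z \<bullet> (q - p) is nonpositive at both endpoints of every fibre. At the
  bottom face this reduces to a normal-cone condition for the quadrant; where \<theta> vanishes the
  upper endpoints turn it into the super-differential inequality for \<theta>; in the interior of the
  top face the maximum principle forces z to be a nonnegative multiple of (-\<nabla>\<theta>, 1). On an edge
  (p1, 0), homogeneity reduces the super-differential to the slopes \<theta>(p1, z) / z, and concavity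
  makes \<partial>\<theta>(p1, z)/\<partial>z increase to their supremum as z decreases to 0. The edge (0, p2) follows
  by the symmetry of \<theta>.\<close>

lemma concave_on_le_linearization:
  fixes F :: "'a::real_normed_vector \<Rightarrow> real"
  assumes conc: "concave_on S F" and x: "x \<in> S" and y: "y \<in> S"
    and der: "(F has_derivative D) (at x)"
  shows "F y \<le> F x + D (y - x)"
proof -
  define psi where "psi = (\<lambda>l::real. F (x + l *\<^sub>R (y - x)))"
  have "((\<lambda>l::real. x + l *\<^sub>R (y - x)) has_derivative (\<lambda>h. h *\<^sub>R (y - x))) (at 0)"
    by (auto intro!: derivative_eq_intros)
  from has_derivative_compose[OF this] der
  have "(psi has_derivative (\<lambda>h. D (h *\<^sub>R (y - x)))) (at 0)"
    by (simp add: psi_def o_def)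
  moreover have "(\<lambda>h. D (h *\<^sub>R (y - x))) = (\<lambda>h. D (y - x) * h)"
    using has_derivative_linear[OF der] by (auto simp: linear_scale)
  ultimately have "(psi has_field_derivative D (y - x)) (at 0)"
    by (simp add: has_field_derivative_def)
  hence lim: "((\<lambda>l. (psi l - psi 0) / (l - 0)) \<longlongrightarrow> D (y - x)) (at_right 0)"
    unfolding has_field_derivative_iff by (blast intro: tendsto_mono at_le)
  have "eventually (\<lambda>l. l \<in> {0<..<1}) (at_right (0::real))"
    by (rule eventually_at_right_real) simp
  hence "eventually (\<lambda>l. F y - F x \<le> (psi l - psi 0) / (l - 0)) (at_right 0)"
  proof eventually_elim
    case (elim l)
    have "x + l *\<^sub>R (y - x) = (1 - l) *\<^sub>R x + l *\<^sub>R y" by (simp add: algebra_simps)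
    hence "psi l \<ge> (1 - l) * F x + l * F y"
      unfolding psi_def using concave_onD[OF conc, of l x y] elim x y by auto
    hence "psi l - psi 0 \<ge> l * (F y - F x)" by (simp add: psi_def algebra_simps)
    thus ?case using elim by (simp add: field_simps)
  qed
  from tendsto_lowerbound[OF lim this] show ?thesis by simp
qed

text \<open>The tangent at z, evaluated at 0 and at w > z, squeezes its slope between
  (\<phi> w - \<phi> z) / (w - z) and \<phi> z / z.\<close>

lemma tangent_slopes_tendsto_SUP:
  fixes phi d :: "real \<Rightarrow> real"
  assumes tangent: "\<And>z y. z > 0 \<Longrightarrow> y \<ge> 0 \<Longrightarrow> phi y \<le> phi z + d z * (y - z)"
    and lim0: "(phi \<longlongrightarrow> 0) (at_right 0)" and phi0: "phi 0 = 0"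
  shows "((\<lambda>z. ereal (d z)) \<longlongrightarrow> (SUP z\<in>{0<..}. ereal (phi z / z))) (at_right 0)"
proof (rule order_tendstoI)
  fix a assume a: "a > (SUP z\<in>{0<..}. ereal (phi z / z))"
  have "eventually (\<lambda>z. z > 0) (at_right (0::real))"
    by (simp add: eventually_at_right_less)
  thus "eventually (\<lambda>z. ereal (d z) < a) (at_right 0)"
  proof eventually_elim
    case (elim z)
    have "d z * z \<le> phi z" using tangent[OF elim, of 0] phi0 by simp
    hence "ereal (d z) \<le> ereal (phi z / z)" using elim by (simp add: field_simps)
    also have "\<dots> \<le> (SUP z\<in>{0<..}. ereal (phi z / z))" using elim by (intro SUP_upper) auto
    finally show ?case using a by simp
  qed
next
  fix a assume "a < (SUP z\<in>{0<..}. ereal (phi z / z))"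
  then obtain w where w: "w > 0" "a < ereal (phi w / w)"
    unfolding less_SUP_iff by auto
  show "eventually (\<lambda>z. a < ereal (d z)) (at_right 0)"
  proof (cases a)
    case (real a')
    have "((\<lambda>z. (phi w - phi z) / (w - z)) \<longlongrightarrow> (phi w - 0) / (w - 0)) (at_right 0)"
      using w by (intro tendsto_intros lim0) auto
    hence "eventually (\<lambda>z. a' < (phi w - phi z) / (w - z)) (at_right 0)"
      using w real by (intro order_tendstoD) auto
    moreover have "eventually (\<lambda>z. z \<in> {0<..<w}) (at_right (0::real))"
      by (rule eventually_at_right_real) (use w in simp)
    ultimately show ?thesis
    proof eventually_elim
      case (elim z)
      have "phi w \<le> phi z + d z * (w - z)" using tangent[of z w] elim by simp
      hence "(phi w - phi z) / (w - z) \<le> d z" using elim by (simp add: field_simps)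
      thus ?case using elim real by simp
    qed
  qed (use w in simp_all)
qed

lemma has_derivative_partials:
  fixes f :: "real \<times> real \<Rightarrow> real"
  assumes "(f has_derivative (\<lambda>h. a * fst h + b * snd h)) (at (x, y))"
  shows "((\<lambda>s. f (s, y)) has_real_derivative a) (at x)"
    and "((\<lambda>t. f (x, t)) has_real_derivative b) (at y)"
proof -
  have "((\<lambda>s. (s, y)) has_derivative (\<lambda>h. (h, 0))) (at x)"
    by (auto intro!: derivative_eq_intros)
  from has_derivative_compose[OF this assms]
  show "((\<lambda>s. f (s, y)) has_real_derivative a) (at x)"
    by (simp add: o_def has_field_derivative_def)
  have "((\<lambda>t. (x, t)) has_derivative (\<lambda>h. (0, h))) (at y)"
    by (auto intro!: derivative_eq_intros)
  from has_derivative_compose[OF this assms]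
  show "((\<lambda>t. f (x, t)) has_real_derivative b) (at y)"
    by (simp add: o_def has_field_derivative_def)
qed

lemma smooth_on2_has_derivative:
  assumes "smooth_on2 f S" and "(x, y) \<in> S"
  shows "(f has_derivative
           (\<lambda>h. deriv (\<lambda>s. f (s, y)) x * fst h + deriv (\<lambda>t. f (x, t)) y * snd h)) (at (x, y))"
proof -
  have "Ck_on (Suc 0) f S" using assms(1) unfolding smooth_on2_def by blast
  then obtain g1 g2 where
    "(f has_derivative (\<lambda>h. g1 (x, y) * fst h + g2 (x, y) * snd h)) (at (x, y))"
    using assms(2) by auto
  moreover from has_derivative_partials[OF this]
  have "deriv (\<lambda>s. f (s, y)) x = g1 (x, y)" "deriv (\<lambda>t. f (x, t)) y = g2 (x, y)"
    by (simp_all add: DERIV_imp_deriv)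
  ultimately show ?thesis by simp
qed

lemma mult_diff_nonpos_on_nonneg_iff:
  fixes z a :: real
  assumes "a \<ge> 0"
  shows "(\<forall>s\<ge>0. z * (s - a) \<le> 0) \<longleftrightarrow> z \<le> 0 \<and> z * a = 0"
proof
  assume h: "\<forall>s\<ge>0. z * (s - a) \<le> 0"
  have "z * a \<le> 0" using h[rule_format, of "a + a"] assms by simp
  moreover have "z * a \<ge> 0" using h[rule_format, of 0] by simp
  moreover have "z \<le> 0" using h[rule_format, of "a + 1"] assms by simp
  ultimately show "z \<le> 0 \<and> z * a = 0" by simp
qed (auto simp: right_diff_distrib mult_nonpos_nonneg)

lemma mem_normal_cone_quadrant_iff:
  "(z1, z2) \<in> normal_cone quadrant (a, b) \<longleftrightarrow>
    (\<forall>s\<ge>0. \<forall>t\<ge>0. z1 * (s - a) + z2 * (t - b) \<le> 0)"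
  by (auto simp: normal_cone_def quadrant_def algebra_simps)

lemma normal_cone_quadrant:
  assumes "a \<ge> 0" "b \<ge> 0"
  shows "(z1, z2) \<in> normal_cone quadrant (a, b) \<longleftrightarrow>
    z1 \<le> 0 \<and> z1 * a = 0 \<and> z2 \<le> 0 \<and> z2 * b = 0"
proof -
  have "(z1, z2) \<in> normal_cone quadrant (a, b) \<longleftrightarrow>
      (\<forall>s\<ge>0. z1 * (s - a) \<le> 0) \<and> (\<forall>t\<ge>0. z2 * (t - b) \<le> 0)"
    unfolding mem_normal_cone_quadrant_iff
  proof safe
    fix s t :: real
    assume h: "\<forall>s\<ge>0. \<forall>t\<ge>0. z1 * (s - a) + z2 * (t - b) \<le> 0"
    show "s \<ge> 0 \<Longrightarrow> z1 * (s - a) \<le> 0" using h[rule_format, of s b] assms by simp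
    show "t \<ge> 0 \<Longrightarrow> z2 * (t - b) \<le> 0" using h[rule_format, of a t] assms by simp
  qed (simp add: add_nonpos_nonpos)
  thus ?thesis using assms by (simp add: mult_diff_nonpos_on_nonneg_iff)
qed

lemma superdiff_theta_ext_iff:
  assumes "a \<ge> 0" "b \<ge> 0"
  shows "(r1, r2) \<in> superdiff (theta_ext th) (a, b) \<longleftrightarrow>
    (\<forall>s\<ge>0. \<forall>t\<ge>0. th s t \<le> th a b + r1 * (s - a) + r2 * (t - b))"
proof -
  have "(r1, r2) \<in> superdiff (theta_ext th) (a, b) \<longleftrightarrow>
      (\<forall>s t. theta_ext th (s, t) \<le> theta_ext th (a, b) + ereal ((r1, r2) \<bullet> ((s, t) - (a, b))))"
    unfolding superdiff_def by simp
  thus ?thesis using assms by (auto simp: theta_ext_def algebra_simps)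
qed

lemma normal_cone_Kset_iff:
  assumes nonneg: "\<And>s t. s \<ge> 0 \<Longrightarrow> t \<ge> 0 \<Longrightarrow> th s t \<ge> 0"
  shows "(z1, z2, z3) \<in> normal_cone (Kset th) (p1, p2, p3) \<longleftrightarrow>
    (\<forall>s\<ge>0. \<forall>t\<ge>0. z1 * (s - p1) + z2 * (t - p2) \<le> z3 * p3 \<and>
                 z1 * (s - p1) + z2 * (t - p2) + z3 * (th s t - p3) \<le> 0)"
    (is "_ \<longleftrightarrow> (\<forall>s\<ge>0. \<forall>t\<ge>0. ?low s t \<and> ?high s t)")
proof -
  have "(z1, z2, z3) \<in> normal_cone (Kset th) (p1, p2, p3) \<longleftrightarrow>
      (\<forall>s\<ge>0. \<forall>t\<ge>0. \<forall>u\<in>{0..th s t}. z1 * (s - p1) + z2 * (t - p2) + z3 * (u - p3) \<le> 0)"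
    unfolding normal_cone_def Kset_def by (auto simp: algebra_simps)
  also have "\<dots> \<longleftrightarrow> (\<forall>s\<ge>0. \<forall>t\<ge>0. ?low s t \<and> ?high s t)"
  proof (intro all_cong1 imp_cong refl iffI conjI ballI)
    fix s t u :: real
    assume "s \<ge> 0" "t \<ge> 0" and uniform:
      "\<forall>u\<in>{0..th s t}. z1 * (s - p1) + z2 * (t - p2) + z3 * (u - p3) \<le> 0"
    show "?low s t"
      using bspec[OF uniform, of 0] nonneg[OF \<open>s \<ge> 0\<close> \<open>t \<ge> 0\<close>] by (simp add: algebra_simps)
    show "?high s t" using uniform nonneg[of s t] \<open>s \<ge> 0\<close> \<open>t \<ge> 0\<close> by auto
  next
    fix s t u :: real
    assume "?low s t \<and> ?high s t" and u: "u \<in> {0..th s t}"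
    moreover have "z3 * u \<le> 0 \<or> z3 * u \<le> z3 * th s t"
      using u by (cases "z3 \<ge> 0") (auto intro: mult_left_mono simp: mult_nonpos_nonneg)
    ultimately show "z1 * (s - p1) + z2 * (t - p2) + z3 * (u - p3) \<le> 0"
      by (auto simp: algebra_simps)
  qed
  finally show ?thesis .
qed

lemma normal_cone_Kset_at_zero:
  assumes nonneg: "\<And>s t. s \<ge> 0 \<Longrightarrow> t \<ge> 0 \<Longrightarrow> th s t \<ge> 0"
    and ab: "a \<ge> 0" "b \<ge> 0" "th a b = 0"
  shows "(z1, z2, z3) \<in> normal_cone (Kset th) (a, b, 0) \<longleftrightarrow>
    (z1, z2) \<in> normal_cone quadrant (a, b) \<and>
    (z3 > 0 \<longrightarrow> (- z1 / z3, - z2 / z3) \<in> superdiff (theta_ext th) (a, b))"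
proof -
  let ?high = "\<forall>s\<ge>0. \<forall>t\<ge>0. z1 * (s - a) + z2 * (t - b) + z3 * th s t \<le> 0"
  have "(z1, z2, z3) \<in> normal_cone (Kset th) (a, b, 0) \<longleftrightarrow>
      (z1, z2) \<in> normal_cone quadrant (a, b) \<and> ?high"
    by (simp add: normal_cone_Kset_iff[OF nonneg] mem_normal_cone_quadrant_iff imp_conjR all_conj_distrib)
  also have "\<dots> \<longleftrightarrow> (z1, z2) \<in> normal_cone quadrant (a, b) \<and>
      (z3 > 0 \<longrightarrow> (- z1 / z3, - z2 / z3) \<in> superdiff (theta_ext th) (a, b))"
  proof (cases "z3 > 0")
    case True
    have "z1 * (s - a) + z2 * (t - b) + z3 * th s t \<le> 0 \<longleftrightarrow>
        th s t \<le> th a b + - z1 / z3 * (s - a) + - z2 / z3 * (t - b)" for s t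
    proof -
      have "- z1 / z3 * (s - a) + - z2 / z3 * (t - b) = (- z1 * (s - a) - z2 * (t - b)) / z3"
        using True by (simp add: field_simps)
      thus ?thesis using True ab(3) by (simp add: pos_le_divide_eq algebra_simps)
    qed
    hence "?high \<longleftrightarrow> (- z1 / z3, - z2 / z3) \<in> superdiff (theta_ext th) (a, b)"
      by (simp add: superdiff_theta_ext_iff[OF ab(1,2)])
    moreover have "(z1, z2) \<in> normal_cone quadrant (a, b)" if ?high
      unfolding mem_normal_cone_quadrant_iff
    proof (intro allI impI)
      fix s t :: real assume "s \<ge> 0" "t \<ge> 0"
      with that mult_nonneg_nonneg[OF less_imp_le[OF True] nonneg[of s t]]
      show "z1 * (s - a) + z2 * (t - b) \<le> 0" by fastforce
    qed
    ultimately show ?thesis using True by blast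
  next
    case False
    have "z3 * th s t \<le> 0" if "s \<ge> 0" "t \<ge> 0" for s t
      using nonneg[OF that] False by (simp add: mult_nonpos_nonneg)
    hence "(z1, z2) \<in> normal_cone quadrant (a, b) \<Longrightarrow> ?high"
      by (simp add: mem_normal_cone_quadrant_iff add_nonpos_nonpos)
    thus ?thesis using False by blast
  qed
  finally show ?thesis .
qed

locale theta_function =
  fixes th :: "real \<Rightarrow> real \<Rightarrow> real"
  assumes cont: "continuous_on quadrant (\<lambda>(s, t). th s t)"
    and conc: "concave_on quadrant (\<lambda>(s, t). th s t)"
    and nonneg: "\<And>s t. s \<ge> 0 \<Longrightarrow> t \<ge> 0 \<Longrightarrow> th s t \<ge> 0"
    and homog: "\<And>c s t. c > 0 \<Longrightarrow> s \<ge> 0 \<Longrightarrow> t \<ge> 0 \<Longrightarrow> th (c * s) (c * t) = c * th s t"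
    and symm: "\<And>s t. s \<ge> 0 \<Longrightarrow> t \<ge> 0 \<Longrightarrow> th s t = th t s"
    and smooth: "smooth_on2 (\<lambda>(s, t). th s t) open_quadrant"
    and zero1: "\<And>s. s \<ge> 0 \<Longrightarrow> th 0 s = 0"
    and zero2: "\<And>s. s \<ge> 0 \<Longrightarrow> th s 0 = 0"
    and pos: "\<And>s t. s > 0 \<Longrightarrow> t > 0 \<Longrightarrow> th s t > 0"
begin

lemma has_derivative_theta:
  assumes "a > 0" "b > 0"
  shows "((\<lambda>(s, t). th s t) has_derivative
           (\<lambda>h. deriv (\<lambda>s. th s b) a * fst h + deriv (\<lambda>t. th a t) b * snd h)) (at (a, b))"
proof -
  have "(a, b) \<in> open_quadrant" using assms by (simp add: open_quadrant_def)
  from smooth_on2_has_derivative[OF smooth this] show ?thesis by (simp only: prod.case)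
qed

lemma tangent_plane_above:
  assumes "a > 0" "b > 0" "s \<ge> 0" "t \<ge> 0"
  shows "th s t \<le> th a b + deriv (\<lambda>s. th s b) a * (s - a) + deriv (\<lambda>t. th a t) b * (t - b)"
  using concave_on_le_linearization[OF conc _ _ has_derivative_theta, of a b "(s, t)"] assms
  by (simp add: quadrant_def)

lemma normal_cone_below_graph:
  assumes "p1 \<ge> 0" "p2 \<ge> 0" "0 < p3" "p3 < th p1 p2"
  shows "normal_cone (Kset th) (p1, p2, p3) = {0}"
proof (intro set_eqI iffI)
  fix z assume "z \<in> normal_cone (Kset th) (p1, p2, p3)"
  moreover obtain z1 z2 z3 where z: "z = (z1, z2, z3)" by (cases z) auto
  ultimately have normal: "\<forall>s\<ge>0. \<forall>t\<ge>0. z1 * (s - p1) + z2 * (t - p2) \<le> z3 * p3 \<and>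
      z1 * (s - p1) + z2 * (t - p2) + z3 * (th s t - p3) \<le> 0"
    using normal_cone_Kset_iff[OF nonneg] by simp
  have "z3 * p3 \<ge> 0" "z3 * (th p1 p2 - p3) \<le> 0"
    using normal[rule_format, of p1 p2] assms(1,2) by auto
  hence "z3 = 0" using assms(3,4) by (simp add: zero_le_mult_iff mult_le_0_iff)
  hence "(z1, z2) \<in> normal_cone quadrant (p1, p2)"
    using normal by (simp add: mem_normal_cone_quadrant_iff)
  moreover have "p1 > 0" "p2 > 0"
    using assms zero1[of p2] zero2[of p1] by (auto simp: le_less)
  ultimately show "z \<in> {0}"
    using z \<open>z3 = 0\<close> assms by (simp add: normal_cone_quadrant zero_prod_def)
qed (simp add: normal_cone_def)

lemma normal_cone_bottom:
  assumes "p1 > 0" "p2 > 0"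
  shows "normal_cone (Kset th) (p1, p2, 0) = {(0, 0, q3) | q3. q3 \<le> 0}"
proof -
  have "(z1, z2, z3) \<in> normal_cone (Kset th) (p1, p2, 0) \<longleftrightarrow> z1 = 0 \<and> z2 = 0 \<and> z3 \<le> 0"
    for z1 z2 z3
  proof
    assume "(z1, z2, z3) \<in> normal_cone (Kset th) (p1, p2, 0)"
    hence normal: "\<forall>s\<ge>0. \<forall>t\<ge>0. z1 * (s - p1) + z2 * (t - p2) \<le> 0 \<and>
        z1 * (s - p1) + z2 * (t - p2) + z3 * th s t \<le> 0"
      using normal_cone_Kset_iff[OF nonneg] by simp
    hence "(z1, z2) \<in> normal_cone quadrant (p1, p2)"
      by (simp add: mem_normal_cone_quadrant_iff)
    hence "z1 = 0" "z2 = 0" using assms by (simp_all add: normal_cone_quadrant)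
    moreover have "z3 * th p1 p2 \<le> 0" using normal[rule_format, of p1 p2] assms by simp
    ultimately show "z1 = 0 \<and> z2 = 0 \<and> z3 \<le> 0"
      using pos[OF assms] by (simp add: mult_le_0_iff)
  qed (auto simp: normal_cone_Kset_iff[OF nonneg] mult_nonpos_nonneg nonneg)
  thus ?thesis by (auto simp: set_eq_iff)
qed

lemma theta_le_mult_snd_if_slopes_le:
  assumes p1: "p1 > 0" and slopes: "\<forall>z>0. th p1 z / z \<le> q" and st: "s \<ge> 0" "t \<ge> 0"
  shows "th s t \<le> q * t"
proof (cases "s > 0 \<and> t > 0")
  case True
  define z where "z = p1 * t / s"
  have z: "z > 0" using True p1 by (simp add: z_def)
  have "th s t = th ((s / p1) * p1) ((s / p1) * z)" using True p1 by (simp add: z_def)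
  also have "\<dots> = (s / p1) * th p1 z" using homog[of "s / p1" p1 z] True p1 z by simp
  also have "\<dots> \<le> (s / p1) * (q * z)"
    using slopes[rule_format, OF z] z True p1 by (intro mult_left_mono) (auto simp: pos_divide_le_eq)
  also have "\<dots> = q * t" using True p1 by (simp add: z_def field_simps)
  finally show ?thesis .
next
  case False
  hence "th s t = 0" using st zero1 zero2 by (auto simp: le_less)
  moreover have "q \<ge> 0" using slopes[rule_format, of 1] nonneg[of p1 1] p1 by simp
  ultimately show ?thesis using st by simp
qed

lemma superdiff_edge_fst:
  assumes "p1 > 0"
  shows "superdiff (theta_ext th) (p1, 0) = {(0, q) | q. \<forall>z>0. th p1 z / z \<le> q}"
proof -
  have superdiff_iff: "(r1, q) \<in> superdiff (theta_ext th) (p1, 0) \<longleftrightarrow>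
      r1 = 0 \<and> (\<forall>z>0. th p1 z / z \<le> q)" for r1 q
  proof -
    have "(r1, q) \<in> superdiff (theta_ext th) (p1, 0) \<longleftrightarrow>
        (\<forall>s\<ge>0. \<forall>t\<ge>0. th s t \<le> r1 * (s - p1) + q * t)"
      using assms by (simp add: superdiff_theta_ext_iff zero2)
    also have "\<dots> \<longleftrightarrow> r1 = 0 \<and> (\<forall>z>0. th p1 z / z \<le> q)"
    proof safe
      assume bound: "\<forall>s\<ge>0. \<forall>t\<ge>0. th s t \<le> r1 * (s - p1) + q * t"
      have "\<forall>s\<ge>0. - r1 * (s - p1) \<le> 0"
      proof (intro allI impI)
        fix s :: real assume "s \<ge> 0"
        thus "- r1 * (s - p1) \<le> 0" using bound[rule_format, of s 0] zero2[of s] by simp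
      qed
      thus "r1 = 0" using assms mult_diff_nonpos_on_nonneg_iff[of p1 "- r1"] by simp
      fix z :: real assume "z > 0"
      thus "th p1 z / z \<le> q" using bound[rule_format, of p1 z] assms
        by (simp add: pos_divide_le_eq)
    next
      fix s t :: real
      assume "\<forall>z>0. th p1 z / z \<le> q" "s \<ge> 0" "t \<ge> 0"
      with theta_le_mult_snd_if_slopes_le[OF assms] show "th s t \<le> 0 * (s - p1) + q * t" by simp
    qed
    finally show ?thesis .
  qed
  show ?thesis
  proof (rule set_eqI)
    fix r :: "real \<times> real"
    show "r \<in> superdiff (theta_ext th) (p1, 0) \<longleftrightarrow> r \<in> {(0, q) | q. \<forall>z>0. th p1 z / z \<le> q}"
      by (cases r) (simp add: superdiff_iff)
  qed
qed

lemma normal_cone_edge_fst: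
  assumes "p1 > 0"
  shows "normal_cone (Kset th) (p1, 0, 0) =
          {(0, q2, q3) | q2 q3. q2 \<le> 0 \<and> q3 \<le> 0}
          \<union> {(0, q2, q3) | q2 q3. q2 \<le> 0 \<and> q3 > 0 \<and>
                 (0, - q2 / q3) \<in> superdiff (theta_ext th) (p1, 0)}"
proof -
  have quadrant: "(z1, z2) \<in> normal_cone quadrant (p1, 0) \<longleftrightarrow> z1 = 0 \<and> z2 \<le> 0" for z1 z2
    using assms by (auto simp: normal_cone_quadrant)
  have "(z1, z2, z3) \<in> normal_cone (Kset th) (p1, 0, 0) \<longleftrightarrow>
      z1 = 0 \<and> z2 \<le> 0 \<and> (z3 > 0 \<longrightarrow> (0, - z2 / z3) \<in> superdiff (theta_ext th) (p1, 0))"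
    for z1 z2 z3
    using normal_cone_Kset_at_zero[OF nonneg, where a=p1 and b=0] assms zero2[of p1] quadrant
    by auto
  thus ?thesis by (auto simp: set_eq_iff not_less)
qed

lemma deriv_edge_fst_tendsto:
  assumes "p1 > 0"
  shows "((\<lambda>z. ereal (deriv (\<lambda>t. th p1 t) z)) \<longlongrightarrow> (SUP z\<in>{0<..}. ereal (th p1 z / z))) (at_right 0)"
proof (rule tangent_slopes_tendsto_SUP)
  show "th p1 y \<le> th p1 z + deriv (\<lambda>t. th p1 t) z * (y - z)" if "z > 0" "y \<ge> 0" for z y
    using tangent_plane_above[of p1 z p1 y] assms that by simp
  have "continuous_on {0..} (\<lambda>t. (\<lambda>(s, t). th s t) (p1, t))"
    by (rule continuous_on_compose2[OF cont]) (auto intro!: continuous_intros simp: quadrant_def assms less_imp_le)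
  hence "((\<lambda>t. th p1 t) \<longlongrightarrow> th p1 0) (at 0 within {0..})"
    by (simp add: continuous_on_def)
  moreover have "at_right (0::real) \<le> at 0 within {0..}" by (rule at_le) auto
  ultimately show "((\<lambda>t. th p1 t) \<longlongrightarrow> 0) (at_right 0)"
    using zero2 assms by (auto intro: tendsto_mono)
qed (use zero2 assms in simp)

lemma superdiff_edge_fst_deriv_limit:
  assumes "p1 > 0"
  shows "\<exists>L :: ereal.
           ((\<lambda>z. ereal (deriv (\<lambda>t. th p1 t) z)) \<longlongrightarrow> L) (at_right 0)
           \<and> (\<forall>q. (0, q) \<in> superdiff (theta_ext th) (p1, 0) \<longleftrightarrow> ereal q \<ge> L)
           \<and> (L = \<infinity> \<longrightarrow> superdiff (theta_ext th) (p1, 0) = {})"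
proof (intro exI conjI allI impI)
  let ?L = "SUP z\<in>{0<..}. ereal (th p1 z / z)"
  show "((\<lambda>z. ereal (deriv (\<lambda>t. th p1 t) z)) \<longlongrightarrow> ?L) (at_right 0)"
    using deriv_edge_fst_tendsto[OF assms] .
  show "(0, q) \<in> superdiff (theta_ext th) (p1, 0) \<longleftrightarrow> ereal q \<ge> ?L" for q
    using superdiff_edge_fst[OF assms] by (auto simp: SUP_le_iff)
  show "superdiff (theta_ext th) (p1, 0) = {}" if "?L = \<infinity>"
  proof -
    have "\<not> (\<forall>z>0. th p1 z / z \<le> q)" for q
    proof
      assume "\<forall>z>0. th p1 z / z \<le> q"
      hence "?L \<le> ereal q" by (auto intro: SUP_least)
      thus False using that by simp
    qed
    thus ?thesis using superdiff_edge_fst[OF assms] by auto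
  qed
qed

lemma normal_cone_apex:
  "normal_cone (Kset th) (0, 0, 0) =
     {(q1, q2, q3) | q1 q2 q3. q1 \<le> 0 \<and> q2 \<le> 0 \<and> q3 \<le> 0}
     \<union> {(q1, q2, q3) | q1 q2 q3. q1 \<le> 0 \<and> q2 \<le> 0 \<and> q3 > 0 \<and>
            (q1 / q3, q2 / q3) \<in> uminus ` superdiff (theta_ext th) (0, 0)}"
proof -
  have "(z1, z2, z3) \<in> normal_cone (Kset th) (0, 0, 0) \<longleftrightarrow>
      z1 \<le> 0 \<and> z2 \<le> 0 \<and> (z3 > 0 \<longrightarrow> (- z1 / z3, - z2 / z3) \<in> superdiff (theta_ext th) (0, 0))"
    for z1 z2 z3
    by (simp add: normal_cone_Kset_at_zero[OF nonneg] zero1 normal_cone_quadrant)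
  moreover have "x \<in> uminus ` A \<longleftrightarrow> - x \<in> A" for x :: "real \<times> real" and A
    by force
  ultimately show ?thesis by (auto simp: set_eq_iff not_less)
qed

lemma normal_cone_graph_imp_gradient_multiple:
  assumes p: "p1 > 0" "p2 > 0"
    and normal: "(z1, z2, z3) \<in> normal_cone (Kset th) (p1, p2, th p1 p2)"
  shows "z3 \<ge> 0 \<and> z1 = - z3 * deriv (\<lambda>s. th s p2) p1 \<and> z2 = - z3 * deriv (\<lambda>t. th p1 t) p2"
proof -
  define a where "a = deriv (\<lambda>s. th s p2) p1"
  define b where "b = deriv (\<lambda>t. th p1 t) p2"
  have endpoints: "\<forall>s\<ge>0. \<forall>t\<ge>0. z1 * (s - p1) + z2 * (t - p2) \<le> z3 * th p1 p2 \<and>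
      z1 * (s - p1) + z2 * (t - p2) + z3 * (th s t - th p1 p2) \<le> 0"
    using normal normal_cone_Kset_iff[OF nonneg] by simp
  have "z3 * th p1 p2 \<ge> 0" using endpoints[rule_format, of p1 p2] p by simp
  hence "z3 \<ge> 0" using pos[OF p] by (simp add: zero_le_mult_iff)
  define F where "F = (\<lambda>(s, t). z1 * (s - p1) + z2 * (t - p2) + z3 * (th s t - th p1 p2))"
  have "((\<lambda>x. th (fst x) (snd x)) has_derivative (\<lambda>h. a * fst h + b * snd h)) (at (p1, p2))"
    using has_derivative_theta[OF p] by (simp add: a_def b_def case_prod_beta')
  hence "(F has_derivative (\<lambda>h. (z1 + z3 * a) * fst h + (z2 + z3 * b) * snd h)) (at (p1, p2))"
    unfolding F_def case_prod_beta' by (auto intro!: derivative_eq_intros simp: algebra_simps)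
  moreover have "eventually (\<lambda>x. x \<in> open_quadrant) (at (p1, p2))"
    using p by (intro eventually_at_in_open') (auto simp: open_quadrant_def open_Times)
  hence "eventually (\<lambda>x. F x \<le> F (p1, p2)) (at (p1, p2))"
    by eventually_elim (use endpoints in \<open>auto simp: F_def open_quadrant_def\<close>)
  ultimately have "(\<lambda>h. (z1 + z3 * a) * fst h + (z2 + z3 * b) * snd h) = (\<lambda>h. 0)"
    by (rule has_derivative_local_max)
  from fun_cong[OF this, of "(1, 0)"] fun_cong[OF this, of "(0, 1)"] \<open>z3 \<ge> 0\<close>
  show ?thesis by (simp add: a_def b_def)
qed

lemma gradient_multiple_in_normal_cone_graph:
  assumes p: "p1 > 0" "p2 > 0" and "l \<ge> 0"
  shows "(l * - deriv (\<lambda>s. th s p2) p1, l * - deriv (\<lambda>t. th p1 t) p2, l)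
           \<in> normal_cone (Kset th) (p1, p2, th p1 p2)"
proof -
  define a where "a = deriv (\<lambda>s. th s p2) p1"
  define b where "b = deriv (\<lambda>t. th p1 t) p2"
  have "\<forall>s\<ge>0. \<forall>t\<ge>0. l * - a * (s - p1) + l * - b * (t - p2) \<le> l * th p1 p2 \<and>
      l * - a * (s - p1) + l * - b * (t - p2) + l * (th s t - th p1 p2) \<le> 0"
  proof (intro allI impI conjI)
    fix s t :: real assume st: "s \<ge> 0" "t \<ge> 0"
    have tangent: "th s t \<le> th p1 p2 + a * (s - p1) + b * (t - p2)"
      using tangent_plane_above[OF p st] by (simp add: a_def b_def)
    have lin: "l * - a * (s - p1) + l * - b * (t - p2) = l * - (a * (s - p1) + b * (t - p2))"
      by (simp add: algebra_simps)
    have "- (a * (s - p1) + b * (t - p2)) \<le> th p1 p2" using tangent nonneg[OF st] by simp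
    thus "l * - a * (s - p1) + l * - b * (t - p2) \<le> l * th p1 p2"
      unfolding lin using \<open>l \<ge> 0\<close> by (simp add: mult_left_mono)
    have "l * (th s t - th p1 p2 - a * (s - p1) - b * (t - p2)) \<le> 0"
      using tangent \<open>l \<ge> 0\<close> by (simp add: mult_nonneg_nonpos)
    thus "l * - a * (s - p1) + l * - b * (t - p2) + l * (th s t - th p1 p2) \<le> 0"
      by (simp add: algebra_simps)
  qed
  thus ?thesis using normal_cone_Kset_iff[OF nonneg] by (simp add: a_def b_def)
qed

lemma normal_cone_graph:
  assumes "p1 > 0" "p2 > 0"
  shows "normal_cone (Kset th) (p1, p2, th p1 p2) =
          {(l * - deriv (\<lambda>s. th s p2) p1, l * - deriv (\<lambda>t. th p1 t) p2, l) | l. l \<ge> 0}"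
proof (intro set_eqI iffI)
  fix z assume "z \<in> normal_cone (Kset th) (p1, p2, th p1 p2)"
  with normal_cone_graph_imp_gradient_multiple[OF assms]
  show "z \<in> {(l * - deriv (\<lambda>s. th s p2) p1, l * - deriv (\<lambda>t. th p1 t) p2, l) | l. l \<ge> 0}"
    by (cases z) (auto simp: mult.commute)
qed (use gradient_multiple_in_normal_cone_graph[OF assms] in blast)

lemma normal_cone_Kset_swap:
  "(z1, z2, z3) \<in> normal_cone (Kset th) (p1, p2, p3) \<longleftrightarrow>
   (z2, z1, z3) \<in> normal_cone (Kset th) (p2, p1, p3)"
proof (simp only: normal_cone_Kset_iff[OF nonneg], intro iffI allI impI)
  fix s t :: real assume st: "s \<ge> 0" "t \<ge> 0"
  {
    assume "\<forall>s\<ge>0. \<forall>t\<ge>0. z1 * (s - p1) + z2 * (t - p2) \<le> z3 * p3 \<and>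
        z1 * (s - p1) + z2 * (t - p2) + z3 * (th s t - p3) \<le> 0"
    from this[rule_format, of t s] st symm[of s t]
    show "z2 * (s - p2) + z1 * (t - p1) \<le> z3 * p3 \<and>
        z2 * (s - p2) + z1 * (t - p1) + z3 * (th s t - p3) \<le> 0" by (simp add: algebra_simps)
  next
    assume "\<forall>s\<ge>0. \<forall>t\<ge>0. z2 * (s - p2) + z1 * (t - p1) \<le> z3 * p3 \<and>
        z2 * (s - p2) + z1 * (t - p1) + z3 * (th s t - p3) \<le> 0"
    from this[rule_format, of t s] st symm[of s t]
    show "z1 * (s - p1) + z2 * (t - p2) \<le> z3 * p3 \<and>
        z1 * (s - p1) + z2 * (t - p2) + z3 * (th s t - p3) \<le> 0" by (simp add: algebra_simps)
  }
qed

lemma superdiff_theta_ext_swap: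
  assumes "a \<ge> 0" "b \<ge> 0"
  shows "(r1, r2) \<in> superdiff (theta_ext th) (a, b) \<longleftrightarrow> (r2, r1) \<in> superdiff (theta_ext th) (b, a)"
proof -
  have "(\<forall>s\<ge>0. \<forall>t\<ge>0. th s t \<le> th a b + r1 * (s - a) + r2 * (t - b)) \<longleftrightarrow>
      (\<forall>s\<ge>0. \<forall>t\<ge>0. th t s \<le> th a b + r1 * (t - a) + r2 * (s - b))"
    by blast
  thus ?thesis
    using assms symm by (simp add: superdiff_theta_ext_iff algebra_simps)
qed

lemma deriv_theta_swap:
  assumes "p \<ge> 0" "z > 0"
  shows "deriv (\<lambda>s. th s p) z = deriv (\<lambda>t. th p t) z"
proof (rule deriv_cong_ev)
  have "eventually (\<lambda>s. s \<in> {0<..}) (nhds z)"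
    using assms by (intro eventually_nhds_in_open) auto
  thus "eventually (\<lambda>s. th s p = th p s) (nhds z)"
    by eventually_elim (use assms symm in auto)
qed simp

lemma normal_cone_edge_snd:
  assumes "p2 > 0"
  shows "normal_cone (Kset th) (0, p2, 0) =
          {(q1, 0, q3) | q1 q3. q1 \<le> 0 \<and> q3 \<le> 0}
          \<union> {(q1, 0, q3) | q1 q3. q1 \<le> 0 \<and> q3 > 0 \<and>
                 (- q1 / q3, 0) \<in> superdiff (theta_ext th) (0, p2)}"
proof -
  have "(q1, 0) \<in> superdiff (theta_ext th) (0, p2) \<longleftrightarrow> (0, q1) \<in> superdiff (theta_ext th) (p2, 0)"
    for q1
    using superdiff_theta_ext_swap[of 0 p2] assms by simp
  thus ?thesis
    using normal_cone_edge_fst[OF assms]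
    by (auto simp: set_eq_iff normal_cone_Kset_swap[of _ _ _ 0 p2])
qed

lemma superdiff_edge_snd_deriv_limit:
  assumes "p2 > 0"
  shows "\<exists>L :: ereal.
           ((\<lambda>z. ereal (deriv (\<lambda>s. th s p2) z)) \<longlongrightarrow> L) (at_right 0)
           \<and> (\<forall>q. (q, 0) \<in> superdiff (theta_ext th) (0, p2) \<longleftrightarrow> ereal q \<ge> L)
           \<and> (L = \<infinity> \<longrightarrow> superdiff (theta_ext th) (0, p2) = {})"
proof -
  obtain L where lim: "((\<lambda>z. ereal (deriv (\<lambda>t. th p2 t) z)) \<longlongrightarrow> L) (at_right 0)"
    and bound: "\<forall>q. (0, q) \<in> superdiff (theta_ext th) (p2, 0) \<longleftrightarrow> ereal q \<ge> L"
    and empty: "L = \<infinity> \<longrightarrow> superdiff (theta_ext th) (p2, 0) = {}"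
    using superdiff_edge_fst_deriv_limit[OF assms] by blast
  have swap: "(r1, r2) \<in> superdiff (theta_ext th) (0, p2) \<longleftrightarrow>
      (r2, r1) \<in> superdiff (theta_ext th) (p2, 0)" for r1 r2
    using superdiff_theta_ext_swap[of 0 p2] assms by simp
  show ?thesis
  proof (intro exI conjI allI impI)
    have "eventually (\<lambda>z. ereal (deriv (\<lambda>t. th p2 t) z) = ereal (deriv (\<lambda>s. th s p2) z)) (at_right 0)"
      using eventually_at_right_less[of 0] by eventually_elim (use assms deriv_theta_swap in simp)
    with lim show "((\<lambda>z. ereal (deriv (\<lambda>s. th s p2) z)) \<longlongrightarrow> L) (at_right 0)"
      by (rule Lim_transform_eventually)
    show "(q, 0) \<in> superdiff (theta_ext th) (0, p2) \<longleftrightarrow> ereal q \<ge> L" for q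
      using swap bound by simp
    assume "L = \<infinity>"
    hence "r \<notin> superdiff (theta_ext th) (0, p2)" for r
      using swap[of "fst r" "snd r"] empty by simp
    thus "superdiff (theta_ext th) (0, p2) = {}" by blast
  qed
qed

end

theorem lemma4p4:
  fixes th :: "real \<Rightarrow> real \<Rightarrow> real"
  assumes cont: "continuous_on quadrant (\<lambda>(s, t). th s t)"
    and conc: "concave_on quadrant (\<lambda>(s, t). th s t)"
    and nonneg: "\<And>s t. s \<ge> 0 \<Longrightarrow> t \<ge> 0 \<Longrightarrow> th s t \<ge> 0"
    and homog: "\<And>c s t. c > 0 \<Longrightarrow> s \<ge> 0 \<Longrightarrow> t \<ge> 0 \<Longrightarrow> th (c * s) (c * t) = c * th s t"
    and symm: "\<And>s t. s \<ge> 0 \<Longrightarrow> t \<ge> 0 \<Longrightarrow> th s t = th t s"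
    and smooth: "smooth_on2 (\<lambda>(s, t). th s t) open_quadrant"
    and zero1: "\<And>s. s \<ge> 0 \<Longrightarrow> th 0 s = 0"
    and zero2: "\<And>s. s \<ge> 0 \<Longrightarrow> th s 0 = 0"
    and diag: "\<And>s. s \<ge> 0 \<Longrightarrow> th s s = s"
    and pos: "\<And>s t. s > 0 \<Longrightarrow> t > 0 \<Longrightarrow> th s t > 0"
    and mono1: "\<And>s s' t. 0 \<le> s \<Longrightarrow> s \<le> s' \<Longrightarrow> t \<ge> 0 \<Longrightarrow> th s t \<le> th s' t"
    and mono2: "\<And>s t t'. s \<ge> 0 \<Longrightarrow> 0 \<le> t \<Longrightarrow> t \<le> t' \<Longrightarrow> th s t \<le> th s t'"
  shows
    "(\<forall>p1 p2 p3. p1 \<ge> 0 \<and> p2 \<ge> 0 \<and> 0 < p3 \<and> p3 < th p1 p2 \<longrightarrow>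
        normal_cone (Kset th) (p1, p2, p3) = {0})
   \<and> (\<forall>p1 p2. p1 > 0 \<and> p2 > 0 \<longrightarrow>
        normal_cone (Kset th) (p1, p2, 0) = {(0, 0, q3) | q3. q3 \<le> 0})
   \<and> (\<forall>p1. p1 > 0 \<longrightarrow>
        normal_cone (Kset th) (p1, 0, 0) =
          {(0, q2, q3) | q2 q3. q2 \<le> 0 \<and> q3 \<le> 0}
          \<union> {(0, q2, q3) | q2 q3. q2 \<le> 0 \<and> q3 > 0 \<and>
                 (0, - q2 / q3) \<in> superdiff (theta_ext th) (p1, 0)}
        \<and> (\<exists>L :: ereal.
             ((\<lambda>z. ereal (deriv (\<lambda>t. th p1 t) z)) \<longlongrightarrow> L) (at_right 0)
             \<and> (\<forall>q. (0, q) \<in> superdiff (theta_ext th) (p1, 0) \<longleftrightarrow> ereal q \<ge> L)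
             \<and> (L = \<infinity> \<longrightarrow> superdiff (theta_ext th) (p1, 0) = {})))
   \<and> (\<forall>p2. p2 > 0 \<longrightarrow>
        normal_cone (Kset th) (0, p2, 0) =
          {(q1, 0, q3) | q1 q3. q1 \<le> 0 \<and> q3 \<le> 0}
          \<union> {(q1, 0, q3) | q1 q3. q1 \<le> 0 \<and> q3 > 0 \<and>
                 (- q1 / q3, 0) \<in> superdiff (theta_ext th) (0, p2)}
        \<and> (\<exists>L :: ereal.
             ((\<lambda>z. ereal (deriv (\<lambda>s. th s p2) z)) \<longlongrightarrow> L) (at_right 0)
             \<and> (\<forall>q. (q, 0) \<in> superdiff (theta_ext th) (0, p2) \<longleftrightarrow> ereal q \<ge> L)
             \<and> (L = \<infinity> \<longrightarrow> superdiff (theta_ext th) (0, p2) = {})))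
   \<and> normal_cone (Kset th) (0, 0, 0) =
        {(q1, q2, q3) | q1 q2 q3. q1 \<le> 0 \<and> q2 \<le> 0 \<and> q3 \<le> 0}
        \<union> {(q1, q2, q3) | q1 q2 q3. q1 \<le> 0 \<and> q2 \<le> 0 \<and> q3 > 0 \<and>
               (q1 / q3, q2 / q3) \<in> uminus ` superdiff (theta_ext th) (0, 0)}
   \<and> (\<forall>p1 p2. p1 > 0 \<and> p2 > 0 \<longrightarrow>
        normal_cone (Kset th) (p1, p2, th p1 p2) =
          {(l * - deriv (\<lambda>s. th s p2) p1, l * - deriv (\<lambda>t. th p1 t) p2, l) | l. l \<ge> 0})"
proof -
  interpret theta_function th
    using cont conc nonneg homog symm smooth zero1 zero2 pos by unfold_locales
  show ?thesis
    by (simp add: normal_cone_below_graph normal_cone_bottom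
        normal_cone_edge_fst superdiff_edge_fst_deriv_limit
        normal_cone_edge_snd superdiff_edge_snd_deriv_limit
        normal_cone_apex normal_cone_graph)
qed

end
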